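(* Let $d\ge 2$ be an integer, $p$ a prime with $p\equiv 1\pmod d$, $t=\frac{p-1}{d}$, and $T$ a generator of $\widehat{\mathbb F_p^{\times}}$. Then for every integer $x$ with $p\nmid x$, $$p^{d-2}\,{}_{d-1}F_{d-2}\left(\left.\begin{array}{cccc}T^{t}&T^{2t}&\ldots&T^{(d-1)t}\\ {}&\epsilon&\ldots&\epsilon\end{array}\right|x\right)_p\equiv(-1)^d\,{}_{d-1}F_{d-2}\left(\left.\begin{array}{cccc}\tfrac{1}{d}&\tfrac{2}{d}&\ldots&\tfrac{d-1}{d}\\ {}&1&\ldots&1\end{array}\right|x\right)_{\mathrm{tr}(p)}\pmod p.$$
   Context: Characters are regarded as $\mathbb Z_p$-valued (their values are $(p-1)$-th roots of unity, which lie in $\mathbb Z_p$) and extended by $\chi(0)=0$; $\epsilon$ is the trivial character; the congruence means the difference lies in $p\mathbb Z_p$, with $x$ reduced mod $p$ on the left. For characters $A,B$ of $\mathbb F_p^\times$, $\binom{A}{B}:=\frac{B(-1)}{p}\sum_{y\in\mathbb F_p}A(y)\overline B(1-y)$, and Greene's function is ${}_{n+1}F_n\left(\left.\begin{array}{ccc}A_0&\ldots&A_n\\ &B_1\ldots&B_n\end{array}\right|x\right)_p:=\frac{p}{p-1}\sum_\chi\binom{A_0\chi}{\chi}\prod_{i=1}^n\binom{A_i\chi}{B_i\chi}\chi(x)$, summed over all characters $\chi$. The truncated classical series is ${}_{n+1}F_n\left(\left.\begin{array}{ccc}a_0&\ldots&a_n\\ &b_1\ldots&b_n\end{array}\right|x\right)_{\mathrm{tr}(m)}:=\sum_{k=0}^{m-1}\frac{(a_0)_k\cdots(a_n)_k}{(b_1)_k\cdots(b_n)_k\,k!}x^k$,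 where $(a)_0=1$, $(a)_k=a(a+1)\cdots(a+k-1)$. *)

theory Defs
  imports Complex_Main "HOL-Computational_Algebra.Primes" "HOL-Number_Theory.Cong"
begin

text \<open>
  The paper regards characters as Z_p-valued and works in Q_p (Greene's function
  contains the factors p/(p-1) and 1/p).  Q_p / Z_p are not available in the library,
  so we work in an arbitrary field K of characteristic 0 (type 'a) together with a
  subring Zp (playing the role of Z_p) that has exactly the properties of Z_p used to
  make sense of the statement: Zp is a local subring with maximal ideal pO and residue
  ring Z/p, and K contains p-1 distinct (p-1)-th roots of unity, all lying in Zp.
  (Q_p with Zp = Z_p is an instance.)
\<close>

definition padic_like :: "int \<Rightarrow> 'a::field_char_0 set \<Rightarrow> bool" where
  "padic_like p Zp \<longleftrightarrow>
     1 \<in> Zp \<and> (\<forall>a\<in>Zp. \<forall>b\<in>Zp. a + b \<in> Zp \<and> a - b \<in> Zp \<and> a * b \<in> Zp) \<and>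
     (\<forall>a\<in>Zp. \<exists>n::int. \<exists>c\<in>Zp. a - of_int n = of_int p * c) \<and>
     (\<forall>n::int. (\<exists>c\<in>Zp. of_int n = of_int p * c) \<longrightarrow> p dvd n) \<and>
     (\<forall>a\<in>Zp. (\<not>(\<exists>c\<in>Zp. a = of_int p * c)) \<longrightarrow> inverse a \<in> Zp) \<and>
     (\<forall>z::'a. z ^ nat (p - 1) = 1 \<longrightarrow> z \<in> Zp) \<and>
     card {z::'a. z ^ nat (p - 1) = 1} = nat (p - 1)"

definition cong_p :: "'a::field_char_0 set \<Rightarrow> int \<Rightarrow> 'a \<Rightarrow> 'a \<Rightarrow> bool" where
  "cong_p Zp p a b \<longleftrightarrow> (\<exists>c\<in>Zp. a - b = of_int p * c)"

text \<open>Multiplicative characters of F_p^*, viewed as functions on the integers that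
  depend only on the residue mod p, extended by chi(0) = 0.\<close>
definition is_char :: "int \<Rightarrow> (int \<Rightarrow> 'a::field) \<Rightarrow> bool" where
  "is_char p \<chi> \<longleftrightarrow> (\<forall>x. \<chi> x = \<chi> (x mod p)) \<and> (\<forall>x. p dvd x \<longrightarrow> \<chi> x = 0) \<and>
     \<chi> 1 = 1 \<and> (\<forall>x y. \<chi> (x * y) = \<chi> x * \<chi> y)"

definition chars :: "int \<Rightarrow> (int \<Rightarrow> 'a::field) set" where
  "chars p = {\<chi>. is_char p \<chi>}"

definition triv_char :: "int \<Rightarrow> int \<Rightarrow> 'a::field" where
  "triv_char p x = (if p dvd x then 0 else 1)"

definition char_pow :: "int \<Rightarrow> (int \<Rightarrow> 'a::field) \<Rightarrow> nat \<Rightarrow> int \<Rightarrow> 'a" where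
  "char_pow p \<chi> k x = (if p dvd x then 0 else \<chi> x ^ k)"

definition char_mult :: "(int \<Rightarrow> 'a::field) \<Rightarrow> (int \<Rightarrow> 'a) \<Rightarrow> int \<Rightarrow> 'a" where
  "char_mult A B x = A x * B x"

definition char_generator :: "int \<Rightarrow> (int \<Rightarrow> 'a::field) \<Rightarrow> bool" where
  "char_generator p T \<longleftrightarrow> is_char p T \<and> (\<forall>\<chi>. is_char p \<chi> \<longrightarrow> (\<exists>k. \<chi> = char_pow p T k))"

text \<open>Greene's binomial coefficient (A over B) = B(-1)/p * sum_y A(y) conj(B)(1-y);
  conj(B)(z) = inverse (B z) (inverse 0 = 0 handles the extension by 0).\<close>
definition gbinom :: "int \<Rightarrow> (int \<Rightarrow> 'a::field) \<Rightarrow> (int \<Rightarrow> 'a) \<Rightarrow> 'a" where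
  "gbinom p A B = B (-1) / of_int p * (\<Sum>y\<in>{0..<p}. A y * inverse (B (1 - y)))"

text \<open>Greene's function  n+1 F n (A0, A_1..A_n; B_1..B_n | x)_p, with the lists
  As = [A_1,...,A_n] and Bs = [B_1,...,B_n].\<close>
definition greene :: "int \<Rightarrow> (int \<Rightarrow> 'a::field) \<Rightarrow> (int \<Rightarrow> 'a) list \<Rightarrow> (int \<Rightarrow> 'a) list
    \<Rightarrow> int \<Rightarrow> 'a" where
  "greene p A0 As Bs x = of_int p / of_int (p - 1) *
     (\<Sum>\<chi>\<in>chars p. gbinom p (char_mult A0 \<chi>) \<chi> *
        (\<Prod>i<length As. gbinom p (char_mult (As ! i) \<chi>) (char_mult (Bs ! i) \<chi>)) * \<chi> x)"

definition hyp_tr :: "'a::field_char_0 list \<Rightarrow> 'a list \<Rightarrow> nat \<Rightarrow> 'a \<Rightarrow> 'a" where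
  "hyp_tr as bs m x = (\<Sum>k<m. (\<Prod>a\<leftarrow>as. pochhammer a k) /
      ((\<Prod>b\<leftarrow>bs. pochhammer b k) * fact k) * x ^ k)"

end

theory Submission
  imports Defs "HOL-Number_Theory.Number_Theory"
begin

(* Every character of F_p^* is a power of the Teichmueller character \<omega>, whose values are the
   (p-1)-th roots of unity in Zp, \<omega>(y) reducing to y mod p; the generator T is \<omega>^k with k prime to p - 1.
   With t = (p-1)/d, each term p * (\<omega>^(mt) \<omega>^a over \<omega>^a) of Greene's sum is congruent to the integer
   (-1)^a \<Sum>_y y^(mt+a) (1-y)^(p-1-a), which the power sums \<Sum>_y y^e \<equiv> -[0 < e, p-1 | e] evaluate to
   -C(a+mt, a). On the classical side j/d \<equiv> -jt (mod p), so (j/d)_k / k! \<equiv> (-1)^k C(jt, k). The two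
   integer series agree after reflecting m to d - m, because C(n,k) \<equiv> (-1)^k C(m,k) (mod p) whenever
   n + m + 1 \<equiv> k; the extra term k = p - 1 of the classical series vanishes. *)

section \<open>Binomial coefficients modulo a prime\<close>

lemma fact_mult_binomial_eq_pochhammer:
  "fact k * int (n choose k) = pochhammer (int n - int k + 1) k"
proof -
  have "(of_int (pochhammer (int n - int k + 1) k) :: rat) = pochhammer (of_nat n - of_nat k + 1) k"
    by (simp flip: pochhammer_of_int)
  also have "\<dots> = fact k * (of_nat n gchoose k)"
    by (simp add: gbinomial_pochhammer')
  also have "\<dots> = of_int (fact k * int (n choose k))"
    by (simp add: binomial_gbinomial)
  finally show ?thesis
    by (metis of_int_eq_iff)
qed

lemma pochhammer_minus_of_nat:
  "pochhammer (- int n) k = (-1) ^ k * (fact k * int (n choose k))"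
  by (simp add: pochhammer_minus fact_mult_binomial_eq_pochhammer)

lemma cong_pochhammer:
  fixes a b m :: int
  shows "[a = b] (mod m) \<Longrightarrow> [pochhammer a k = pochhammer b k] (mod m)"
  unfolding pochhammer_prod by (auto intro!: cong_prod cong_add)

lemma prime_not_dvd_fact_int:
  fixes p :: int
  assumes "prime p" "int k < p"
  shows "\<not> p dvd fact k"
proof -
  obtain P where P: "p = int P"
    using prime_ge_0_int[OF assms(1)] nonneg_int_cases by blast
  have "\<not> P dvd fact k"
    using assms P prime_dvd_fact_iff[of P k] by simp
  then show ?thesis
    unfolding P by (metis int_dvd_int_iff of_nat_fact)
qed

(* k! C(n,k) is a falling factorial of n, which modulo p only depends on n - k + 1 \<equiv> -m. *)
lemma binomial_cong_reflect:
  fixes p :: int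
  assumes "prime p" "int k < p" "[int n + int m + 1 = int k] (mod p)"
  shows "[int (n choose k) = (-1) ^ k * int (m choose k)] (mod p)"
proof -
  have diff: "int n - int k + 1 - - int m = int n + int m + 1 - int k"
    by simp
  have "[int n - int k + 1 = - int m] (mod p)"
    using assms(3) unfolding cong_iff_dvd_diff diff .
  then have "[fact k * int (n choose k) = pochhammer (- int m) k] (mod p)"
    unfolding fact_mult_binomial_eq_pochhammer by (rule cong_pochhammer)
  also have "pochhammer (- int m) k = fact k * ((-1) ^ k * int (m choose k))"
    by (simp add: pochhammer_minus_of_nat)
  finally have "[fact k * int (n choose k) = fact k * ((-1) ^ k * int (m choose k))] (mod p)" .
  moreover have "coprime (fact k) p"
    using prime_imp_coprime[OF assms(1) prime_not_dvd_fact_int[OF assms(1,2)]] by (simp add: coprime_commute)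
  ultimately show ?thesis
    by (simp add: cong_mult_lcancel)
qed

section \<open>Power sums modulo a prime\<close>

lemma fermat_theorem_int:
  fixes p y :: int
  assumes "prime p" "\<not> p dvd y"
  shows "[y ^ nat (p - 1) = 1] (mod p)"
proof -
  have "residues p"
    using prime_gt_1_int[OF assms(1)] by (simp add: residues_def)
  moreover have "coprime y p"
    using assms by (simp add: prime_imp_coprime coprime_commute)
  ultimately have "[y ^ totient (nat p) = 1] (mod p)"
    by (rule residues.euler_theorem)
  moreover have "totient (nat p) = nat (p - 1)"
    using assms(1) by (simp add: totient_prime prime_nat_iff_prime nat_diff_distrib)
  ultimately show ?thesis
    by simp
qed

lemma prime_primitive_root_int:
  fixes p :: int
  assumes "prime p"
  obtains g where "\<not> p dvd g" "\<And>e. [g ^ e = 1] (mod p) \<longleftrightarrow> nat (p - 1) dvd e"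
proof -
  obtain P where P: "p = int P"
    using prime_ge_0_int[OF assms] nonneg_int_cases by blast
  with assms have "prime P"
    by simp
  then obtain g where g: "residue_primroot P g"
    using prime_primitive_root_exists prime_gt_1_nat by blast
  then have ord: "ord P g = nat (p - 1)"
    using \<open>prime P\<close> by (simp add: residue_primroot_def totient_prime P nat_diff_distrib)
  have "coprime P g"
    using g by (simp add: residue_primroot_def)
  then have "\<not> p dvd int g"
    using \<open>prime P\<close> unfolding P int_dvd_int_iff
    by (metis coprime_absorb_left not_prime_unit)
  moreover have "[int g ^ e = 1] (mod p) \<longleftrightarrow> nat (p - 1) dvd e" for e
    using ord ord_divides[of g e P] cong_int_iff[of "g ^ e" 1 P] unfolding P by simp
  ultimately show ?thesis
    using that by blast
qed

lemma bij_betw_mult_mod_int: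
  fixes g p :: int
  assumes "coprime g p" "0 < p"
  shows "bij_betw (\<lambda>y. g * y mod p) {0..<p} {0..<p}"
proof -
  have "inj_on (\<lambda>y. g * y mod p) {0..<p}"
  proof
    fix y y' assume "y \<in> {0..<p}" "y' \<in> {0..<p}" "g * y mod p = g * y' mod p"
    with assms(1) show "y = y'"
      by (metis atLeastLessThan_iff cong_def cong_less_imp_eq_int cong_mult_lcancel)
  qed
  moreover have "(\<lambda>y. g * y mod p) ` {0..<p} \<subseteq> {0..<p}"
    using assms(2) by auto
  ultimately show ?thesis
    by (simp add: bij_betw_def endo_inj_surj)
qed

lemma power_sum_mod_prime_eq_0:
  fixes p :: int
  assumes "prime p" "\<not> nat (p - 1) dvd e"
  shows "[(\<Sum>y\<in>{0..<p}. y ^ e) = 0] (mod p)"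
proof -
  obtain g where g: "\<not> p dvd g" "\<And>e. [g ^ e = 1] (mod p) \<longleftrightarrow> nat (p - 1) dvd e"
    using prime_primitive_root_int[OF assms(1)] by blast
  have "coprime g p"
    using prime_imp_coprime[OF assms(1) g(1)] by (simp add: coprime_commute)
  define S where "S = (\<Sum>y\<in>{0..<p}. y ^ e)"
  have "S = (\<Sum>y\<in>{0..<p}. (g * y mod p) ^ e)"
    unfolding S_def using bij_betw_mult_mod_int[OF \<open>coprime g p\<close> prime_gt_0_int[OF assms(1)]]
    by (rule sum.reindex_bij_betw[symmetric])
  also have "[\<dots> = (\<Sum>y\<in>{0..<p}. (g * y) ^ e)] (mod p)"
    by (intro cong_sum cong_pow) (simp add: cong_def)
  also have "(\<Sum>y\<in>{0..<p}. (g * y) ^ e) = g ^ e * S"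
    by (simp add: S_def power_mult_distrib sum_distrib_left)
  finally have "[S = g ^ e * S] (mod p)" .
  moreover have "(g ^ e - 1) * S = - (S - g ^ e * S)"
    by (simp add: algebra_simps)
  ultimately have "p dvd (g ^ e - 1) * S"
    unfolding cong_iff_dvd_diff by (simp only: dvd_minus_iff)
  moreover have "\<not> p dvd g ^ e - 1"
    using g(2)[of e] assms(2) by (simp add: cong_iff_dvd_diff)
  ultimately have "p dvd S"
    using assms(1) by (simp add: prime_dvd_mult_iff)
  then show ?thesis
    by (simp add: S_def cong_0_iff)
qed

lemma power_sum_mod_prime:
  fixes p :: int
  assumes "prime p"
  shows "[(\<Sum>y\<in>{0..<p}. y ^ e) = (if 0 < e \<and> nat (p - 1) dvd e then -1 else 0)] (mod p)"
proof -
  have p2: "p \<ge> 2"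
    using assms prime_ge_2_int by blast
  consider "e = 0" | "0 < e" "nat (p - 1) dvd e" | "\<not> nat (p - 1) dvd e"
    by fastforce
  then show ?thesis
  proof cases
    case 1
    then show ?thesis
      using p2 by (simp add: cong_0_iff)
  next
    case 2
    then obtain r where r: "e = nat (p - 1) * r"
      by blast
    have "{0..<p} = insert 0 {1..<p}"
      using p2 by auto
    then have "(\<Sum>y\<in>{0..<p}. y ^ e) = (\<Sum>y\<in>{1..<p}. y ^ e)"
      using \<open>0 < e\<close> by simp
    also have "[\<dots> = (\<Sum>y\<in>{1..<p}. 1)] (mod p)"
    proof (rule cong_sum)
      fix y assume "y \<in> {1..<p}"
      then have "\<not> p dvd y"
        by (auto simp: zdvd_not_zless)
      then show "[y ^ e = 1] (mod p)"
        using cong_pow[OF fermat_theorem_int[OF assms], of y r] by (simp add: r power_mult)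
    qed
    also have "[(\<Sum>y\<in>{1..<p}. 1) = (-1::int)] (mod p)"
      using p2 by (simp add: cong_iff_dvd_diff)
    finally show ?thesis
      using 2 by simp
  next
    case 3
    then show ?thesis
      using power_sum_mod_prime_eq_0[OF assms] by simp
  qed
qed

lemma dvd_iff_eq_below_double:
  fixes n q :: nat
  assumes "0 < n" "n < 2 * q"
  shows "q dvd n \<longleftrightarrow> n = q"
proof
  assume "q dvd n"
  then obtain r where r: "n = q * r"
    by blast
  have "0 < r"
    using assms(1) r by (cases r) auto
  moreover have "r < 2"
    using assms(2) r by (simp add: mult.commute[of 2])
  ultimately show "n = q"
    using r by (metis One_nat_def less_2_cases mult.right_neutral not_less_zero)
qed simp

lemma power_mult_binomial_expand:
  fixes y :: "'a::comm_ring_1"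
  shows "y ^ u * (1 - y) ^ v = (\<Sum>i\<le>v. of_nat (v choose i) * (-1) ^ i * y ^ (u + i))"
proof -
  have "(1 - y) ^ v = (- y + 1) ^ v"
    by simp
  also have "\<dots> = (\<Sum>i\<le>v. of_nat (v choose i) * (- y) ^ i * 1 ^ (v - i))"
    by (rule binomial_ring)
  also have "\<dots> = (\<Sum>i\<le>v. of_nat (v choose i) * (-1) ^ i * y ^ i)"
    by (simp add: power_minus[of y] mult.assoc)
  finally show ?thesis
    by (simp add: sum_distrib_left power_add mult.left_commute)
qed

lemma binomial_power_sum_mod_prime:
  fixes p :: int
  assumes "prime p" "0 < u" "u + v < 2 * nat (p - 1)"
  shows "[(\<Sum>y\<in>{0..<p}. y ^ u * (1 - y) ^ v) =
          (if u \<le> nat (p - 1) then - ((-1) ^ (nat (p - 1) - u) * int (v choose (nat (p - 1) - u)))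
           else 0)] (mod p)"
proof -
  define q where "q = nat (p - 1)"
  define c where "c i = (-1) ^ i * int (v choose i)" for i
  have "(\<Sum>y\<in>{0..<p}. y ^ u * (1 - y) ^ v) = (\<Sum>y\<in>{0..<p}. \<Sum>i\<le>v. c i * y ^ (u + i))"
    by (rule sum.cong[OF refl]) (simp add: power_mult_binomial_expand c_def mult_ac)
  also have "\<dots> = (\<Sum>i\<le>v. c i * (\<Sum>y\<in>{0..<p}. y ^ (u + i)))"
    by (subst sum.swap) (simp add: sum_distrib_left)
  also have "[\<dots> = (\<Sum>i\<le>v. c i * (if i = q - u \<and> u \<le> q then -1 else 0))] (mod p)"
  proof (intro cong_sum cong_mult cong_refl)
    fix i assume "i \<in> {..v}"
    then have "0 < u + i \<and> q dvd u + i \<longleftrightarrow> i = q - u \<and> u \<le> q"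
      using assms(2,3) dvd_iff_eq_below_double[of "u + i" q] by (auto simp: q_def)
    then show "[(\<Sum>y\<in>{0..<p}. y ^ (u + i)) = (if i = q - u \<and> u \<le> q then -1 else 0)] (mod p)"
      using power_sum_mod_prime[OF assms(1), of "u + i"] by (simp add: q_def)
  qed
  also have "(\<Sum>i\<le>v. c i * (if i = q - u \<and> u \<le> q then -1 else 0)) =
             (\<Sum>i\<le>v. if i = q - u then (if u \<le> q then - c i else 0) else 0)"
    by (rule sum.cong) auto
  also have "\<dots> = (if u \<le> q then - c (q - u) else 0)"
    by (simp add: sum.delta c_def binomial_eq_0)
  finally show ?thesis
    unfolding c_def q_def .
qed

section \<open>Reflection of binomial products\<close>

lemma prod_list_map_upt: "(\<Prod>x\<leftarrow>map f [m..<n]. g x) = (\<Prod>j\<in>{m..<n}. g (f j))"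
  using prod.distinct_set_conv_list[of "[m..<n]" "\<lambda>j. g (f j)"] by (simp add: o_def)

lemma bij_betw_mult_mod:
  fixes k d :: nat
  assumes "coprime k d"
  shows "bij_betw (\<lambda>j. k * j mod d) {1..<d} {1..<d}"
proof -
  have "inj_on (\<lambda>j. k * j mod d) {1..<d}"
  proof
    fix i j assume "i \<in> {1..<d}" "j \<in> {1..<d}" "k * i mod d = k * j mod d"
    then show "i = j"
      using assms by (auto simp: cong_def[symmetric] cong_mult_lcancel_nat cong_less_modulus_unique_nat)
  qed
  moreover have "k * j mod d \<in> {1..<d}" if "j \<in> {1..<d}" for j
  proof -
    have "\<not> d dvd k * j"
    proof
      assume "d dvd k * j"
      then have "d dvd j"
        using assms by (simp add: coprime_commute coprime_dvd_mult_right_iff)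
      then show False
        using that by (auto dest: dvd_imp_le)
    qed
    then show ?thesis
      using that by (simp add: dvd_eq_mod_eq_0)
  qed
  moreover from this have "(\<lambda>j. k * j mod d) ` {1..<d} \<subseteq> {1..<d}"
    by blast
  ultimately show ?thesis
    using endo_inj_surj[of "{1..<d}" "\<lambda>j. k * j mod d"] by (simp add: bij_betw_def)
qed

lemma binomial_product_reflect_cong:
  fixes p :: int
  assumes "prime p" "d * t = nat (p - 1)" "a < nat (p - 1)"
  shows "[(\<Prod>m\<in>{1..<d}. - int ((a + m * t) choose a)) =
          (-1) ^ (d - 1) * (\<Prod>m\<in>{1..<d}. (-1) ^ a * int ((m * t) choose a))] (mod p)"
proof -
  have dt: "int (d * t) = p - 1"
    using assms(1,2) prime_gt_0_int[OF assms(1)] by simp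
  have "(\<Prod>m\<in>{1..<d}. - int ((a + m * t) choose a)) =
        (\<Prod>m\<in>{1..<d}. - int ((a + (d - m) * t) choose a))"
    by (subst prod.atLeastLessThan_rev) simp
  also have "[\<dots> = (\<Prod>m\<in>{1..<d}. - ((-1) ^ a * int ((m * t) choose a)))] (mod p)"
  proof (intro cong_prod cong_minus_minus_iff[THEN iffD2])
    fix m assume "m \<in> {1..<d}"
    then have "(d - m) * t + m * t = d * t"
      by (metis add_mult_distrib le_add_diff_inverse2 atLeastLessThan_iff less_imp_le)
    then have "int (a + (d - m) * t + m * t + 1) = int a + p"
      using dt by (simp only: add.assoc)
    then have "int (a + (d - m) * t) + int (m * t) + 1 = int a + p"
      by (simp only: of_nat_add of_nat_1)
    then have "[int (a + (d - m) * t) + int (m * t) + 1 = int a] (mod p)"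
      by (simp add: cong_iff_dvd_diff)
    then show "[int ((a + (d - m) * t) choose a) = (-1) ^ a * int ((m * t) choose a)] (mod p)"
      using assms(3) dt by (intro binomial_cong_reflect[OF assms(1)]) auto
  qed
  also have "(\<Prod>m\<in>{1..<d}. - ((-1) ^ a * int ((m * t) choose a))) =
             (-1) ^ (d - 1) * (\<Prod>m\<in>{1..<d}. (-1) ^ a * int ((m * t) choose a))"
    by (simp add: prod_uminus)
  finally show ?thesis .
qed

lemma binomial_series_reflect_cong:
  fixes p x :: int
  assumes "prime p" "d * t = nat (p - 1)" "d \<ge> 2"
  shows "[- (\<Sum>a<nat (p - 1). (\<Prod>m\<in>{1..<d}. - int ((a + m * t) choose a)) * x ^ a) =
          (-1) ^ d * (\<Sum>k<nat p. (\<Prod>j\<in>{1..<d}. (-1) ^ k * int ((j * t) choose k)) * x ^ k)] (mod p)"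
proof -
  define P where "P k = (\<Prod>j\<in>{1..<d}. (-1) ^ k * int ((j * t) choose k))" for k
  obtain d' where d': "d = Suc d'"
    using assms(3) by (cases d) auto
  have "p \<ge> 2"
    using prime_ge_2_int[OF assms(1)] .
  then have "0 < t"
    using assms(2) by (cases t) auto
  then have "t < nat (p - 1)"
    using assms(2,3) mult_less_mono1[of 1 d t] by simp
  then have "P (nat (p - 1)) = 0"
    using assms(3) by (auto simp: P_def binomial_eq_0 intro!: prod_zero bexI[of _ 1])
  moreover have "nat p = Suc (nat (p - 1))"
    using \<open>p \<ge> 2\<close> by simp
  ultimately have extend: "(\<Sum>a<nat (p - 1). P a * x ^ a) = (\<Sum>k<nat p. P k * x ^ k)"
    by simp
  have "[- (\<Sum>a<nat (p - 1). (\<Prod>m\<in>{1..<d}. - int ((a + m * t) choose a)) * x ^ a) =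
         - (\<Sum>a<nat (p - 1). (-1) ^ (d - 1) * P a * x ^ a)] (mod p)"
    unfolding P_def
    by (intro cong_minus_minus_iff[THEN iffD2] cong_sum cong_mult cong_refl
        binomial_product_reflect_cong[OF assms(1,2)]) simp
  also have "- (\<Sum>a<nat (p - 1). (-1) ^ (d - 1) * P a * x ^ a) = (-1) ^ d * (\<Sum>a<nat (p - 1). P a * x ^ a)"
    using d' by (simp add: sum_distrib_left mult.assoc flip: sum_negf)
  finally show ?thesis
    by (simp only: extend[unfolded P_def] P_def)
qed

section \<open>Characters\<close>

lemma char_pow_char_pow: "char_pow p (char_pow p \<chi> k) m = char_pow p \<chi> (k * m)"
  by (auto simp: char_pow_def power_mult fun_eq_iff)

lemma char_pow_1: "is_char p \<chi> \<Longrightarrow> char_pow p \<chi> 1 = \<chi>"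
  by (auto simp: char_pow_def is_char_def fun_eq_iff)

lemma is_charD:
  assumes "is_char p \<chi>"
  shows "\<chi> x = \<chi> (x mod p)" "p dvd x \<Longrightarrow> \<chi> x = 0" "\<chi> 1 = 1" "\<chi> (x * y) = \<chi> x * \<chi> y"
  using assms unfolding is_char_def by blast+

lemma is_char_char_pow:
  fixes p :: int
  assumes "prime p" "is_char p \<chi>"
  shows "is_char p (char_pow p \<chi> n)"
  unfolding is_char_def char_pow_def
proof (intro conjI allI impI)
  fix x
  show "(if p dvd x then 0 else \<chi> x ^ n) = (if p dvd x mod p then 0 else \<chi> (x mod p) ^ n)"
    by (simp add: dvd_eq_mod_eq_0 flip: is_charD(1)[OF assms(2)])
next
  fix x y
  show "(if p dvd x * y then 0 else \<chi> (x * y) ^ n) =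
        (if p dvd x then 0 else \<chi> x ^ n) * (if p dvd y then 0 else \<chi> y ^ n)"
    using assms(1) is_charD(4)[OF assms(2)] by (simp add: prime_dvd_mult_iff power_mult_distrib)
next
  show "(if p dvd 1 then 0 else \<chi> 1 ^ n) = 1"
    using assms(1) not_prime_unit is_charD(3)[OF assms(2)] by auto
qed simp

lemma char_power:
  assumes "is_char p \<chi>"
  shows "\<chi> (y ^ n) = \<chi> y ^ n"
  by (induction n) (simp_all add: is_charD(3,4)[OF assms])

lemma char_root_of_unity:
  fixes p :: int
  assumes "prime p" "is_char p \<chi>" "\<not> p dvd y"
  shows "\<chi> y ^ nat (p - 1) = 1"
proof -
  have "y ^ nat (p - 1) mod p = 1"
    using fermat_theorem_int[OF assms(1,3)] prime_gt_1_int[OF assms(1)] by (simp add: cong_def)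
  then have "\<chi> (y ^ nat (p - 1)) = 1"
    using is_charD(1,3)[OF assms(2)] by (metis (no_types))
  then show ?thesis
    by (simp only: char_power[OF assms(2)])
qed

lemma char_pow_mod:
  fixes p :: int
  assumes "prime p" "is_char p \<chi>"
  shows "char_pow p \<chi> n = char_pow p \<chi> (n mod nat (p - 1))"
proof
  fix y
  have "\<chi> y ^ n = \<chi> y ^ (nat (p - 1) * (n div nat (p - 1)) + n mod nat (p - 1))"
    by (simp only: mult_div_mod_eq)
  also have "\<dots> = (\<chi> y ^ nat (p - 1)) ^ (n div nat (p - 1)) * \<chi> y ^ (n mod nat (p - 1))"
    by (simp only: power_add power_mult)
  finally show "char_pow p \<chi> n y = char_pow p \<chi> (n mod nat (p - 1)) y"
    using char_root_of_unity[OF assms] by (simp add: char_pow_def)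
qed

lemma char_mult_triv_char: "is_char p \<chi> \<Longrightarrow> char_mult (triv_char p) \<chi> = \<chi>"
  by (auto simp: char_mult_def triv_char_def fun_eq_iff dest: is_charD(2))

lemma greene_eq_sum_prod_gbinom:
  fixes T :: "int \<Rightarrow> 'a::field"
  assumes "d \<ge> 2"
  shows "greene p (char_pow p T t) (map (\<lambda>j. char_pow p T (j * t)) [2..<d]) (replicate (d - 2) (triv_char p)) x =
    of_int p / of_int (p - 1) *
      (\<Sum>\<chi>\<in>chars p. (\<Prod>j\<in>{1..<d}. gbinom p (char_mult (char_pow p T (j * t)) \<chi>) \<chi>) * \<chi> x)"
  unfolding greene_def
proof (intro arg_cong[where f = "\<lambda>u. _ * u"] sum.cong refl)
  fix \<chi> :: "int \<Rightarrow> 'a" assume "\<chi> \<in> chars p"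
  then have triv: "char_mult (triv_char p) \<chi> = \<chi>"
    by (simp add: chars_def char_mult_triv_char)
  define f where "f j = gbinom p (char_mult (char_pow p T (j * t)) \<chi>) \<chi>" for j
  have "(\<Prod>i<length (map (\<lambda>j. char_pow p T (j * t)) [2..<d]).
          gbinom p (char_mult (map (\<lambda>j. char_pow p T (j * t)) [2..<d] ! i) \<chi>)
                   (char_mult (replicate (d - 2) (triv_char p) ! i) \<chi>)) = (\<Prod>i<d - 2. f (i + 2))"
    by (rule prod.cong) (auto simp: f_def triv add.commute)
  also have "\<dots> = (\<Prod>j\<in>{2..<d}. f j)"
    by (rule prod.reindex_bij_witness[of _ "\<lambda>j. j - 2" "\<lambda>i. i + 2"]) auto
  also have "f 1 * \<dots> = (\<Prod>j\<in>{1..<d}. f j)"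
    using assms by (simp add: prod.atLeast_Suc_lessThan numeral_2_eq_2)
  finally show "gbinom p (char_mult (char_pow p T t) \<chi>) \<chi> *
          (\<Prod>i<length (map (\<lambda>j. char_pow p T (j * t)) [2..<d]).
              gbinom p (char_mult (map (\<lambda>j. char_pow p T (j * t)) [2..<d] ! i) \<chi>)
                       (char_mult (replicate (d - 2) (triv_char p) ! i) \<chi>)) * \<chi> x =
        (\<Prod>j\<in>{1..<d}. gbinom p (char_mult (char_pow p T (j * t)) \<chi>) \<chi>) * \<chi> x"
    by (simp add: f_def)
qed

section \<open>Reduction modulo p in Zp\<close>

locale padic_prime =
  fixes Zp :: "'a::field_char_0 set" and p :: int
  assumes padic_like: "padic_like p Zp" and prime: "prime p"
begin

abbreviation q :: nat where
  "q \<equiv> nat (p - 1)"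

lemma p_ge_2: "p \<ge> 2"
  using prime by (rule prime_ge_2_int)

lemma int_q: "int q = p - 1"
  using p_ge_2 by simp

lemma q_pos: "0 < q"
  using p_ge_2 by simp

lemma p_not_dvd_1: "\<not> p dvd 1"
  using prime not_prime_unit by blast

lemma power_q_eq: "(x::'b::monoid_mult) * x ^ (q - 1) = x ^ q"
  using q_pos by (metis Suc_diff_1 power_Suc)

lemma Zp_one: "1 \<in> Zp"
  and Zp_add: "a \<in> Zp \<Longrightarrow> b \<in> Zp \<Longrightarrow> a + b \<in> Zp"
  and Zp_diff: "a \<in> Zp \<Longrightarrow> b \<in> Zp \<Longrightarrow> a - b \<in> Zp"
  and Zp_mult: "a \<in> Zp \<Longrightarrow> b \<in> Zp \<Longrightarrow> a * b \<in> Zp"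
  and Zp_lift: "a \<in> Zp \<Longrightarrow> \<exists>n::int. \<exists>c\<in>Zp. a - of_int n = of_int p * c"
  and Zp_of_int_dvd: "c \<in> Zp \<Longrightarrow> of_int n = of_int p * c \<Longrightarrow> p dvd n"
  and Zp_inverse: "a \<in> Zp \<Longrightarrow> \<not> (\<exists>c\<in>Zp. a = of_int p * c) \<Longrightarrow> inverse a \<in> Zp"
  and Zp_root_of_unity: "z ^ q = 1 \<Longrightarrow> z \<in> Zp"
  and card_roots_of_unity: "card {z::'a. z ^ q = 1} = q"
  using padic_like unfolding padic_like_def by blast+

lemma Zp_zero: "0 \<in> Zp"
  using Zp_diff[OF Zp_one Zp_one] by simp

lemma Zp_uminus: "a \<in> Zp \<Longrightarrow> - a \<in> Zp"
  using Zp_diff[OF Zp_zero] by fastforce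

lemma Zp_of_int: "of_int n \<in> Zp"
proof -
  have nat: "of_nat m \<in> Zp" for m
    by (induction m) (auto intro: Zp_add Zp_one Zp_zero)
  show ?thesis
  proof (cases "0 \<le> n")
    case True
    then show ?thesis
      using nat[of "nat n"] by simp
  next
    case False
    then show ?thesis
      using Zp_uminus[OF nat[of "nat (- n)"]] by simp
  qed
qed

definition reduces_to :: "'a \<Rightarrow> int \<Rightarrow> bool" where
  "reduces_to a n \<longleftrightarrow> a \<in> Zp \<and> (\<exists>c\<in>Zp. a - of_int n = of_int p * c)"

lemma reduces_to_of_int: "reduces_to (of_int n) n"
  using Zp_of_int Zp_zero by (auto simp: reduces_to_def intro!: bexI[of _ 0])

lemma reduces_to_0: "reduces_to 0 0"
  and reduces_to_1: "reduces_to 1 1"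
  and reduces_to_of_nat: "reduces_to (of_nat m) (int m)"
  using reduces_to_of_int[of 0] reduces_to_of_int[of 1] reduces_to_of_int[of "int m"] by simp_all

lemma reduces_to_cong:
  assumes "reduces_to a n" "[n = m] (mod p)"
  shows "reduces_to a m"
proof -
  obtain c where c: "a \<in> Zp" "c \<in> Zp" "a - of_int n = of_int p * c"
    using assms(1) by (auto simp: reduces_to_def)
  obtain k where k: "n - m = p * k"
    using assms(2) by (metis cong_iff_dvd_diff dvdE)
  have "a - of_int m = (a - of_int n) + of_int (n - m)"
    by simp
  also have "\<dots> = of_int p * (c + of_int k)"
    using c(3) k by (simp add: algebra_simps)
  finally show ?thesis
    using c Zp_add Zp_of_int by (auto simp: reduces_to_def)
qed

lemma reduces_to_add:
  assumes "reduces_to a n" "reduces_to b m"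
  shows "reduces_to (a + b) (n + m)"
proof -
  obtain c c' where *: "a \<in> Zp" "b \<in> Zp" "c \<in> Zp" "c' \<in> Zp"
    "a - of_int n = of_int p * c" "b - of_int m = of_int p * c'"
    using assms unfolding reduces_to_def by blast
  then have "a + b - of_int (n + m) = of_int p * (c + c')"
    by (simp add: algebra_simps)
  then show ?thesis
    unfolding reduces_to_def using * by (blast intro: Zp_add)
qed

lemma reduces_to_minus:
  assumes "reduces_to a n"
  shows "reduces_to (- a) (- n)"
proof -
  obtain c where *: "a \<in> Zp" "c \<in> Zp" "a - of_int n = of_int p * c"
    using assms unfolding reduces_to_def by blast
  then have "- a - of_int (- n) = of_int p * (- c)"
    by (simp add: algebra_simps)
  then show ?thesis
    unfolding reduces_to_def using * by (blast intro: Zp_uminus)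
qed

lemma reduces_to_mult:
  assumes "reduces_to a n" "reduces_to b m"
  shows "reduces_to (a * b) (n * m)"
proof -
  obtain c c' where *: "a \<in> Zp" "b \<in> Zp" "c \<in> Zp" "c' \<in> Zp"
    "a - of_int n = of_int p * c" "b - of_int m = of_int p * c'"
    using assms unfolding reduces_to_def by blast
  have "a * b - of_int (n * m) = a * (b - of_int m) + (a - of_int n) * of_int m"
    by (simp add: algebra_simps)
  also have "\<dots> = of_int p * (a * c' + c * of_int m)"
    using * by (simp add: algebra_simps)
  finally show ?thesis
    unfolding reduces_to_def using *
    by (blast intro: Zp_add Zp_mult Zp_of_int)
qed

lemma reduces_to_power: "reduces_to a n \<Longrightarrow> reduces_to (a ^ k) (n ^ k)"
  by (induction k) (auto intro: reduces_to_mult reduces_to_1)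

lemma reduces_to_sum: "(\<And>i. i \<in> S \<Longrightarrow> reduces_to (f i) (g i)) \<Longrightarrow> reduces_to (sum f S) (sum g S)"
  by (induction S rule: infinite_finite_induct) (auto intro: reduces_to_add reduces_to_0)

lemma reduces_to_prod: "(\<And>i. i \<in> S \<Longrightarrow> reduces_to (f i) (g i)) \<Longrightarrow> reduces_to (prod f S) (prod g S)"
  by (induction S rule: infinite_finite_induct) (auto intro: reduces_to_mult reduces_to_1)

lemma reduces_to_pochhammer: "reduces_to a n \<Longrightarrow> reduces_to (pochhammer a k) (pochhammer n k)"
  unfolding pochhammer_prod by (intro reduces_to_prod reduces_to_add reduces_to_of_nat)

lemma reduces_to_exists: "a \<in> Zp \<Longrightarrow> \<exists>n. reduces_to a n"
  using Zp_lift by (auto simp: reduces_to_def)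

lemma reduces_to_unique:
  assumes "reduces_to a n" "reduces_to a m"
  shows "[n = m] (mod p)"
proof -
  obtain c where "c \<in> Zp" "a + - a - of_int (n + - m) = of_int p * c"
    using reduces_to_add[OF assms(1) reduces_to_minus[OF assms(2)]] unfolding reduces_to_def by blast
  then have "- c \<in> Zp" "of_int (n - m) = of_int p * (- c)"
    by (simp_all add: Zp_uminus algebra_simps)
  then have "p dvd n - m"
    by (rule Zp_of_int_dvd)
  then show ?thesis
    by (simp add: cong_iff_dvd_diff)
qed

lemma Zp_inverse_of_int: "\<not> p dvd f \<Longrightarrow> inverse (of_int f) \<in> Zp"
  using Zp_inverse[OF Zp_of_int] Zp_of_int_dvd by blast

lemma reduces_to_divide:
  assumes "reduces_to a (f * n)" "\<not> p dvd f"
  shows "reduces_to (a / of_int f) n"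
proof -
  obtain c where c: "a \<in> Zp" "c \<in> Zp" "a - of_int (f * n) = of_int p * c"
    using assms(1) by (auto simp: reduces_to_def)
  have "of_int f \<noteq> (0::'a)"
    using assms(2) by auto
  then have "a / of_int f - of_int n = (a - of_int (f * n)) * inverse (of_int f)"
    by (simp add: field_simps)
  also have "\<dots> = of_int p * (c * inverse (of_int f))"
    using c(3) by simp
  finally show ?thesis
    unfolding reduces_to_def divide_inverse using c Zp_inverse_of_int[OF assms(2)]
    by (blast intro: Zp_mult)
qed

lemma cong_p_if_reduces_to:
  assumes "reduces_to a n" "reduces_to b m" "[n = m] (mod p)"
  shows "cong_p Zp p a b"
proof -
  have "reduces_to b n"
    using assms(2) cong_sym[OF assms(3)] by (rule reduces_to_cong)
  then have "reduces_to (a + - b) (n + - n)"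
    by (intro reduces_to_add[OF assms(1)] reduces_to_minus)
  then show ?thesis
    by (simp add: reduces_to_def cong_p_def)
qed

end

section \<open>The Teichmueller character\<close>

context padic_prime
begin

lemma root_of_unity_reduces_to_unit:
  assumes "reduces_to z n" "z ^ q = 1"
  shows "\<not> p dvd n"
proof
  assume "p dvd n"
  have "reduces_to 1 (n ^ q)"
    using reduces_to_power[OF assms(1), of q] assms(2) by simp
  then have "[1 = n ^ q] (mod p)"
    by (rule reduces_to_unique[OF reduces_to_1])
  moreover have "p dvd n ^ q"
    using dvd_trans[OF \<open>p dvd n\<close> dvd_power[of q n]] q_pos by simp
  ultimately show False
    using p_not_dvd_1 cong_dvd_iff by blast
qed

(* u = z/w is a root of unity reducing to 1; if u \<noteq> 1, then 1 + u + ... + u^(q-1) = 0,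
   although it reduces to q = p - 1. *)
lemma roots_of_unity_reduces_to_inj:
  assumes z: "z ^ q = 1" "reduces_to z n" and w: "w ^ q = 1" "reduces_to w n"
  shows "z = w"
proof -
  define u where "u = z * w ^ (q - 1)"
  have "u ^ q = z ^ q * (w ^ q) ^ (q - 1)"
    by (simp add: u_def power_mult_distrib mult.commute flip: power_mult)
  then have u_root: "u ^ q = 1"
    using z(1) w(1) by simp
  have "reduces_to u (n ^ q)"
    unfolding u_def power_q_eq[of n, symmetric] by (intro reduces_to_mult reduces_to_power z(2) w(2))
  then have u_1: "reduces_to u 1"
    using fermat_theorem_int[OF prime root_of_unity_reduces_to_unit[OF z(2,1)]] by (rule reduces_to_cong)
  have "u = 1"
  proof (rule ccontr)
    assume "u \<noteq> 1"
    then have "(\<Sum>i<q. u ^ i) = 0"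
      using geometric_sum[of u q] u_root by simp
    moreover have "reduces_to (\<Sum>i<q. u ^ i) (\<Sum>i<q. 1 ^ i)"
      by (intro reduces_to_sum reduces_to_power u_1)
    ultimately have "[0 = p - 1] (mod p)"
      using reduces_to_unique[OF reduces_to_0] int_q by simp
    then have "p dvd p - 1"
      using cong_0_iff cong_sym by blast
    then show False
      using p_not_dvd_1 dvd_diff[OF dvd_refl[of p], of "p - 1"] by simp
  qed
  have "z = z * (w * w ^ (q - 1))"
    using w(1) by (simp only: power_q_eq mult_1_right)
  also have "\<dots> = u * w"
    by (simp add: u_def mult_ac)
  finally show ?thesis
    using \<open>u = 1\<close> by (simp only: mult_1_left)
qed

definition residue :: "'a \<Rightarrow> int" where
  "residue z = (SOME n. reduces_to z n) mod p"

lemma reduces_to_residue: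
  assumes "z \<in> Zp"
  shows "reduces_to z (residue z)"
proof -
  have "reduces_to z (SOME n. reduces_to z n)"
    using reduces_to_exists[OF assms] by (rule someI_ex)
  then show ?thesis
    unfolding residue_def by (rule reduces_to_cong) (simp add: cong_def)
qed

(* The q roots of unity have distinct nonzero residues, so by counting every nonzero residue occurs. *)
lemma residue_roots_of_unity: "residue ` {z. z ^ q = 1} = {1..<p}"
proof -
  let ?U = "{z::'a. z ^ q = 1}"
  have red: "reduces_to z (residue z)" if "z \<in> ?U" for z
    using that Zp_root_of_unity reduces_to_residue by simp
  have inj: "inj_on residue ?U"
  proof (rule inj_onI)
    fix z w assume "z \<in> ?U" "w \<in> ?U" "residue z = residue w"
    then show "z = w"
      using red[of z] red[of w] roots_of_unity_reduces_to_inj[of z "residue z" w] by simp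
  qed
  have sub: "residue ` ?U \<subseteq> {1..<p}"
  proof
    fix m assume "m \<in> residue ` ?U"
    then obtain z where z: "z \<in> ?U" "m = residue z"
      by blast
    then have "\<not> p dvd m"
      using root_of_unity_reduces_to_unit[OF red[OF z(1)]] by simp
    moreover have "0 \<le> m" "m < p"
      using z p_ge_2 by (auto simp: residue_def)
    ultimately show "m \<in> {1..<p}"
      by (cases "m = 0") auto
  qed
  have "card (residue ` ?U) = card {1..<p}"
    using card_image[OF inj] card_roots_of_unity by simp
  then show ?thesis
    by (rule card_subset_eq[OF finite_atLeastLessThan_int sub])
qed

lemma root_of_unity_reduces_to_exists:
  assumes "\<not> p dvd y"
  obtains z where "z ^ q = 1" "reduces_to z y"
proof -
  have "0 \<le> y mod p" "y mod p < p" "y mod p \<noteq> 0"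
    using assms p_ge_2 by (auto simp: dvd_eq_mod_eq_0)
  then have "y mod p \<in> residue ` {z. z ^ q = 1}"
    unfolding residue_roots_of_unity by simp
  then obtain z where z: "z ^ q = 1" "residue z = y mod p"
    by auto
  have "reduces_to z (residue z)"
    using Zp_root_of_unity[OF z(1)] by (rule reduces_to_residue)
  then have "reduces_to z y"
    by (rule reduces_to_cong) (simp add: z(2) cong_def)
  with z(1) show ?thesis
    by (rule that)
qed

definition teichmuller :: "int \<Rightarrow> 'a" where
  "teichmuller y = (if p dvd y then 0 else THE z. z ^ q = 1 \<and> reduces_to z y)"

lemma teichmuller_unique:
  assumes "\<not> p dvd y" "z ^ q = 1" "reduces_to z y"
  shows "teichmuller y = z"
proof -
  have "(THE z. z ^ q = 1 \<and> reduces_to z y) = z"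
    by (rule the_equality) (use assms roots_of_unity_reduces_to_inj in blast)+
  then show ?thesis
    using assms(1) by (simp add: teichmuller_def)
qed

lemma
  assumes "\<not> p dvd y"
  shows teichmuller_root_of_unity: "teichmuller y ^ q = 1"
    and teichmuller_reduces_to: "reduces_to (teichmuller y) y"
proof -
  obtain z where "z ^ q = 1" "reduces_to z y"
    using root_of_unity_reduces_to_exists[OF assms] .
  then show "teichmuller y ^ q = 1" "reduces_to (teichmuller y) y"
    using teichmuller_unique[OF assms] by simp_all
qed

lemma teichmuller_nonzero:
  assumes "\<not> p dvd y"
  shows "teichmuller y \<noteq> 0"
proof
  assume "teichmuller y = 0"
  then have "teichmuller y ^ q = 0"
    using q_pos by simp
  then show False
    using teichmuller_root_of_unity[OF assms] by simp
qed

lemma is_char_teichmuller: "is_char p teichmuller"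
  unfolding is_char_def
proof (intro conjI allI impI)
  fix x
  show "teichmuller x = teichmuller (x mod p)"
  proof (cases "p dvd x")
    case False
    then have "\<not> p dvd x mod p"
      by (simp add: dvd_eq_mod_eq_0)
    moreover have "reduces_to (teichmuller x) (x mod p)"
      using teichmuller_reduces_to[OF False] by (rule reduces_to_cong) (simp add: cong_def)
    ultimately have "teichmuller (x mod p) = teichmuller x"
      using teichmuller_root_of_unity[OF False] by (intro teichmuller_unique)
    then show ?thesis ..
  qed (simp add: teichmuller_def dvd_eq_mod_eq_0)
next
  show "teichmuller 1 = 1"
    using teichmuller_unique[of 1 1] reduces_to_1 p_not_dvd_1 by simp
next
  fix x y
  show "teichmuller (x * y) = teichmuller x * teichmuller y"
  proof (cases "p dvd x \<or> p dvd y")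
    case False
    then have "\<not> p dvd x * y"
      using prime by (simp add: prime_dvd_mult_iff)
    moreover have "(teichmuller x * teichmuller y) ^ q = 1"
      using False teichmuller_root_of_unity by (simp add: power_mult_distrib)
    moreover have "reduces_to (teichmuller x * teichmuller y) (x * y)"
      using False teichmuller_reduces_to by (blast intro: reduces_to_mult)
    ultimately show ?thesis
      by (rule teichmuller_unique)
  qed (auto simp: teichmuller_def)
qed (simp add: teichmuller_def)

lemma char_pow_teichmuller_reduces_to:
  "\<not> p dvd x \<Longrightarrow> reduces_to (char_pow p teichmuller a x) (x ^ a)"
  using reduces_to_power[OF teichmuller_reduces_to] by (simp add: char_pow_def)

lemma char_pow_teichmuller_inj:
  assumes "a < q" "b < q" "char_pow p teichmuller a = char_pow p teichmuller b"
  shows "a = b"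
proof -
  obtain g where g: "\<not> p dvd g" "\<And>e. [g ^ e = 1] (mod p) \<longleftrightarrow> q dvd e"
    using prime_primitive_root_int[OF prime] by blast
  have contra: False if "a < b" "b < q" "char_pow p teichmuller a = char_pow p teichmuller b" for a b
  proof -
    define w where "w = teichmuller g"
    have "w ^ a = w ^ b"
      using fun_cong[OF that(3), of g] g(1) by (simp add: char_pow_def w_def)
    moreover have "w ^ a * w ^ (b - a) = w ^ b"
      using \<open>a < b\<close> by (simp flip: power_add)
    ultimately have "w ^ a * w ^ (b - a) = w ^ a * 1"
      by simp
    then have "w ^ (b - a) = 1"
      using teichmuller_nonzero[OF g(1)] by (simp add: w_def)
    then have "reduces_to 1 (g ^ (b - a))"
      using reduces_to_power[OF teichmuller_reduces_to[OF g(1)], of "b - a"] by (simp add: w_def)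
    then have "[g ^ (b - a) = 1] (mod p)"
      using reduces_to_unique[OF _ reduces_to_1] by blast
    then have "q dvd b - a"
      using g(2) by blast
    then show False
      using that by (auto dest: dvd_imp_le)
  qed
  show ?thesis
    using assms contra[of a b] contra[of b a] by (cases a b rule: linorder_cases) auto
qed

lemma chars_eq_teichmuller_powers:
  fixes T :: "int \<Rightarrow> 'a"
  assumes "char_generator p T"
  shows "chars p = (\<lambda>a. char_pow p teichmuller a) ` {..<q}"
proof -
  have T: "is_char p T"
    using assms by (simp add: char_generator_def)
  have sub_T: "chars p \<subseteq> (\<lambda>a. char_pow p T a) ` {..<q}"
  proof
    fix \<chi> :: "int \<Rightarrow> 'a" assume "\<chi> \<in> chars p"
    then obtain k where "\<chi> = char_pow p T k"
      using assms by (auto simp: chars_def char_generator_def)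
    then have "\<chi> = char_pow p T (k mod q)"
      using char_pow_mod[OF prime T] by simp
    then show "\<chi> \<in> (\<lambda>a. char_pow p T a) ` {..<q}"
      using q_pos by auto
  qed
  then have fin: "finite (chars p :: (int \<Rightarrow> 'a) set)"
    by (rule finite_subset) simp
  have "card (chars p :: (int \<Rightarrow> 'a) set) \<le> card ((\<lambda>a. char_pow p T a) ` {..<q})"
    using sub_T by (rule card_mono[rotated]) simp
  also have "\<dots> \<le> q"
    using card_image_le[of "{..<q}"] by simp
  finally have card: "card (chars p :: (int \<Rightarrow> 'a) set) \<le> q" .
  have inj: "inj_on (\<lambda>a. char_pow p teichmuller a) {..<q}"
    by (auto intro!: inj_onI char_pow_teichmuller_inj)
  have sub: "(\<lambda>a. char_pow p teichmuller a) ` {..<q} \<subseteq> chars p"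
    using is_char_char_pow[OF prime is_char_teichmuller] by (auto simp: chars_def)
  show ?thesis
    using card_subset_eq[OF fin sub] card card_image[OF inj] card_mono[OF fin sub] by simp
qed

lemma char_generator_teichmuller_power:
  fixes T :: "int \<Rightarrow> 'a"
  assumes "char_generator p T"
  obtains k where "coprime k q" "T = char_pow p teichmuller k"
proof -
  have "T \<in> chars p"
    using assms by (simp add: char_generator_def chars_def)
  then obtain k where k: "k < q" "T = char_pow p teichmuller k"
    using chars_eq_teichmuller_powers[OF assms] by auto
  obtain m where m: "teichmuller = char_pow p T m"
    using assms is_char_teichmuller by (auto simp: char_generator_def)
  have "char_pow p teichmuller 1 = char_pow p T m"
    using char_pow_1[OF is_char_teichmuller] m by simp
  also have "\<dots> = char_pow p teichmuller ((k * m) mod q)"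
    unfolding k(2) char_pow_char_pow by (rule char_pow_mod[OF prime is_char_teichmuller])
  finally have "char_pow p teichmuller 1 = char_pow p teichmuller ((k * m) mod q)" .
  then have "[k * m = 1] (mod q)"
    using char_pow_teichmuller_inj[of 1 "(k * m) mod q"] q_pos
    by (cases "q = 1") (auto simp: cong_def)
  then have "coprime k q"
    using cong_imp_coprime[of 1 "k * m" q] by (simp add: cong_sym_eq)
  with k(2) show ?thesis
    using that by blast
qed

end

section \<open>Greene's function modulo p\<close>

context padic_prime
begin

lemma even_q:
  assumes "1 < q"
  shows "even q"
proof -
  have "odd p"
    using assms prime by (intro prime_odd_int) auto
  then show ?thesis
    using int_q by (metis even_add even_of_nat odd_one diff_add_cancel)
qed

lemma inverse_root_of_unity_power:
  assumes "(z::'a) ^ q = 1" "a < q"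
  shows "inverse (z ^ a) = z ^ (q - a)"
proof (rule inverse_unique)
  show "z ^ a * z ^ (q - a) = 1"
    using assms by (simp flip: power_add)
qed

lemma jacobi_term_reduces_to:
  assumes "0 < e" "a < q"
  shows "reduces_to
     (char_pow p teichmuller e y * char_pow p teichmuller a y * inverse (char_pow p teichmuller a (1 - y)))
     (y ^ (e + a) * (1 - y) ^ (q - a))"
proof (cases "p dvd y \<or> p dvd 1 - y")
  case True
  then have "p dvd y ^ (e + a) \<or> p dvd (1 - y) ^ (q - a)"
    using assms dvd_trans[OF _ dvd_power[of "e + a" y]] dvd_trans[OF _ dvd_power[of "q - a" "1 - y"]] by auto
  then have "p dvd y ^ (e + a) * (1 - y) ^ (q - a)"
    by (auto intro: dvd_mult dvd_mult2)
  then have "reduces_to 0 (y ^ (e + a) * (1 - y) ^ (q - a))"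
    using reduces_to_cong[OF reduces_to_0] by (simp add: cong_0_iff cong_sym_eq)
  with True show ?thesis
    by (auto simp: char_pow_def)
next
  case False
  then have "char_pow p teichmuller e y * char_pow p teichmuller a y * inverse (char_pow p teichmuller a (1 - y)) =
             teichmuller y ^ (e + a) * teichmuller (1 - y) ^ (q - a)"
    using inverse_root_of_unity_power[OF teichmuller_root_of_unity assms(2)]
    by (simp add: char_pow_def power_add)
  moreover have "reduces_to (teichmuller y ^ (e + a) * teichmuller (1 - y) ^ (q - a))
                   (y ^ (e + a) * (1 - y) ^ (q - a))"
    using False by (intro reduces_to_mult reduces_to_power teichmuller_reduces_to) auto
  ultimately show ?thesis
    by simp
qed

lemma p_gbinom_teichmuller_reduces_to:
  assumes "0 < e" "a < q"
  shows "reduces_to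
     (of_int p * gbinom p (char_mult (char_pow p teichmuller e) (char_pow p teichmuller a))
        (char_pow p teichmuller a))
     ((-1) ^ a * (\<Sum>y\<in>{0..<p}. y ^ (e + a) * (1 - y) ^ (q - a)))"
proof -
  have "(of_int p :: 'a) \<noteq> 0"
    using p_ge_2 by simp
  then have eq: "of_int p * gbinom p (char_mult (char_pow p teichmuller e) (char_pow p teichmuller a))
               (char_pow p teichmuller a) =
             char_pow p teichmuller a (-1) * (\<Sum>y\<in>{0..<p}. char_pow p teichmuller e y *
               char_pow p teichmuller a y * inverse (char_pow p teichmuller a (1 - y)))"
    by (simp add: gbinom_def char_mult_def)
  have "reduces_to (char_pow p teichmuller a (-1)) ((-1) ^ a)"
    using char_pow_teichmuller_reduces_to[of "-1" a] p_not_dvd_1 by simp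
  then show ?thesis
    unfolding eq by (intro reduces_to_mult reduces_to_sum jacobi_term_reduces_to[OF assms])
qed

lemma jacobi_sum_cong:
  assumes "0 < e" "e < q" "a < q"
  shows "[(-1) ^ a * (\<Sum>y\<in>{0..<p}. y ^ (e + a) * (1 - y) ^ (q - a)) = - int ((a + e) choose a)] (mod p)"
proof -
  define S where "S = (\<Sum>y\<in>{0..<p}. y ^ (e + a) * (1 - y) ^ (q - a))"
  have sum_cong: "[S = (if e + a \<le> q then - ((-1) ^ (q - (e + a)) * int ((q - a) choose (q - (e + a))))
                      else 0)] (mod p)"
    unfolding S_def using assms by (intro binomial_power_sum_mod_prime[OF prime]) auto
  have "[(-1) ^ a * S = - ((-1) ^ e * int ((q - a) choose e))] (mod p)"
  proof (cases "e + a \<le> q")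
    case True
    have "(q - a) choose (q - (e + a)) = (q - a) choose e"
      using True binomial_symmetric[of e "q - a"] by (simp add: diff_diff_left add.commute)
    with sum_cong True have "[(-1) ^ a * S = (-1) ^ a * - ((-1) ^ (q - (e + a)) * int ((q - a) choose e))] (mod p)"
      by (intro cong_scalar_left) simp
    moreover have "(-1::int) ^ a * (-1) ^ (q - (e + a)) = (-1) ^ e"
      using True even_q assms by (simp add: minus_one_power_iff flip: power_add)
    ultimately show ?thesis
      by (simp add: mult.assoc[symmetric])
  next
    case False
    then have "(q - a) choose e = 0"
      using assms(3) by (intro binomial_eq_0) (simp add: less_diff_conv2)
    moreover have "[(-1) ^ a * S = (-1) ^ a * 0] (mod p)"
      using sum_cong False by (intro cong_scalar_left) simp
    ultimately show ?thesis
      by (simp only: of_nat_0 mult_zero_right minus_zero)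
  qed
  also have "[- ((-1) ^ e * int ((q - a) choose e)) =
              - ((-1) ^ e * ((-1) ^ e * int ((a + e) choose e)))] (mod p)"
    using binomial_cong_reflect[OF prime, of e "q - a" "a + e"] assms int_q
    by (intro cong_minus_minus_iff[THEN iffD2] cong_mult cong_refl) (auto simp: cong_iff_dvd_diff)
  also have "- ((-1) ^ e * ((-1) ^ e * int ((a + e) choose e))) = - int ((a + e) choose a)"
    using binomial_symmetric[of e "a + e"] by (simp add: mult.assoc[symmetric] flip: power_mult_distrib)
  finally show ?thesis
    unfolding S_def .
qed

lemma gbinom_teichmuller_reduces_to:
  assumes "0 < e" "e < q" "a < q"
  shows "reduces_to
     (of_int p * gbinom p (char_mult (char_pow p teichmuller e) (char_pow p teichmuller a))
        (char_pow p teichmuller a))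
     (- int ((a + e) choose a))"
  using p_gbinom_teichmuller_reduces_to[OF assms(1,3)] jacobi_sum_cong[OF assms] by (rule reduces_to_cong)

lemma greene_teichmuller_expansion:
  fixes T :: "int \<Rightarrow> 'a"
  assumes "d \<ge> 2" "d * t = q" "char_generator p T" "T = char_pow p teichmuller k" "coprime k d"
  shows "greene p (char_pow p T t) (map (\<lambda>j. char_pow p T (j * t)) [2..<d]) (replicate (d - 2) (triv_char p)) x =
    of_int p / of_int (p - 1) *
      (\<Sum>a<q. (\<Prod>m\<in>{1..<d}. gbinom p (char_mult (char_pow p teichmuller (m * t)) (char_pow p teichmuller a))
                                        (char_pow p teichmuller a)) * char_pow p teichmuller a x)"
proof -
  have T_pow: "char_pow p T (j * t) = char_pow p teichmuller ((k * j) mod d * t)" for j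
  proof -
    have "char_pow p T (j * t) = char_pow p teichmuller ((k * (j * t)) mod q)"
      unfolding assms(4) char_pow_char_pow by (rule char_pow_mod[OF prime is_char_teichmuller])
    also have "(k * (j * t)) mod q = (k * j) mod d * t"
      unfolding assms(2)[symmetric] by (simp add: mult.assoc[symmetric] mod_mult_mult2)
    finally show ?thesis .
  qed
  have inj: "inj_on (\<lambda>a. char_pow p teichmuller a) {..<q}"
    by (auto intro!: inj_onI char_pow_teichmuller_inj)
  have "greene p (char_pow p T t) (map (\<lambda>j. char_pow p T (j * t)) [2..<d]) (replicate (d - 2) (triv_char p)) x =
    of_int p / of_int (p - 1) *
      (\<Sum>a<q. (\<Prod>j\<in>{1..<d}. gbinom p (char_mult (char_pow p teichmuller ((k * j) mod d * t))
                (char_pow p teichmuller a)) (char_pow p teichmuller a)) * char_pow p teichmuller a x)"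
    unfolding greene_eq_sum_prod_gbinom[OF assms(1)] chars_eq_teichmuller_powers[OF assms(3)]
      sum.reindex[OF inj] o_def
    by (simp only: T_pow)
  also have "\<dots> = of_int p / of_int (p - 1) *
      (\<Sum>a<q. (\<Prod>m\<in>{1..<d}. gbinom p (char_mult (char_pow p teichmuller (m * t))
                (char_pow p teichmuller a)) (char_pow p teichmuller a)) * char_pow p teichmuller a x)"
    by (intro sum.cong refl arg_cong[where f = "\<lambda>u. _ * u"] arg_cong[where f = "\<lambda>u. u * _"]
        prod.reindex_bij_betw[OF bij_betw_mult_mod[OF assms(5)]])
  finally show ?thesis .
qed

lemma greene_reduces_to:
  fixes T :: "int \<Rightarrow> 'a"
  assumes "d \<ge> 2" "d * t = q" "char_generator p T" "T = char_pow p teichmuller k" "coprime k d"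
    and "\<not> p dvd x"
  shows "reduces_to
     (of_int p ^ (d - 2) *
        greene p (char_pow p T t) (map (\<lambda>j. char_pow p T (j * t)) [2..<d]) (replicate (d - 2) (triv_char p)) x)
     (- (\<Sum>a<q. (\<Prod>m\<in>{1..<d}. - int ((a + m * t) choose a)) * x ^ a))"
proof -
  define G where "G m a = gbinom p (char_mult (char_pow p teichmuller (m * t)) (char_pow p teichmuller a))
                                   (char_pow p teichmuller a)" for m a
  define S0 where "S0 = (\<Sum>a<q. (\<Prod>m\<in>{1..<d}. G m a) * char_pow p teichmuller a x)"
  define S where "S = (\<Sum>a<q. (\<Prod>m\<in>{1..<d}. of_int p * G m a) * char_pow p teichmuller a x)"
  define N where "N = (\<Sum>a<q. (\<Prod>m\<in>{1..<d}. - int ((a + m * t) choose a)) * x ^ a)"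
  obtain d' where "d = Suc (Suc d')"
    using assms(1) by (metis add_2_eq_Suc le_Suc_ex)
  then have "S = of_int p ^ (d - 2) * of_int p * S0"
    by (simp add: S_def S0_def prod.distrib sum_distrib_left mult_ac)
  then have "of_int p ^ (d - 2) *
      greene p (char_pow p T t) (map (\<lambda>j. char_pow p T (j * t)) [2..<d]) (replicate (d - 2) (triv_char p)) x
      = S / of_int (p - 1)"
    unfolding greene_teichmuller_expansion[OF assms(1-5)] S0_def G_def by (simp add: mult_ac)
  moreover have "reduces_to S N"
    unfolding S_def N_def
  proof (intro reduces_to_sum reduces_to_mult reduces_to_prod)
    fix a m assume "a \<in> {..<q}" "m \<in> {1..<d}"
    moreover have "0 < t"
      using assms(2) q_pos by (cases t) auto
    ultimately have "0 < m * t" "m * t < q"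
      using assms(2) mult_less_mono1[of m d t] by auto
    then show "reduces_to (of_int p * G m a) (- int ((a + m * t) choose a))"
      unfolding G_def using \<open>a \<in> {..<q}\<close> by (intro gbinom_teichmuller_reduces_to) auto
  next
    fix a
    show "reduces_to (char_pow p teichmuller a x) (x ^ a)"
      using assms(6) by (rule char_pow_teichmuller_reduces_to)
  qed
  then have "reduces_to S ((p - 1) * (- N))"
    by (rule reduces_to_cong) (simp add: cong_iff_dvd_diff algebra_simps)
  then have "reduces_to (S / of_int (p - 1)) (- N)"
    by (rule reduces_to_divide) (use p_not_dvd_1 dvd_diff[OF dvd_refl[of p], of "p - 1"] in auto)
  ultimately show ?thesis
    unfolding N_def by simp
qed

end

section \<open>The truncated classical series modulo p\<close>

context padic_prime
begin

lemma reduces_to_of_nat_divide: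
  assumes "d * t = q"
  shows "reduces_to (of_nat j / of_nat d :: 'a) (- int (j * t))"
proof -
  have dt: "int d * int t = p - 1"
    using assms int_q by (metis of_nat_mult)
  have "0 < t" "0 < d"
    using assms q_pos by (auto intro!: Nat.gr0I)
  then have "d * 1 \<le> d * t"
    by (intro mult_le_mono2) simp
  then have "\<not> p dvd int d"
    using \<open>0 < d\<close> assms int_q by (intro zdvd_not_zless) auto
  have "int d * - int (j * t) = - (int j * (int d * int t))"
    by (simp add: mult_ac)
  also have "\<dots> = int j - int j * p"
    by (simp add: dt algebra_simps)
  finally have "[int j = int d * - int (j * t)] (mod p)"
    by (simp add: cong_iff_dvd_diff)
  then have "reduces_to (of_int (int j)) (int d * - int (j * t))"
    by (rule reduces_to_cong[OF reduces_to_of_int])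
  then show ?thesis
    using reduces_to_divide[OF _ \<open>\<not> p dvd int d\<close>] by simp
qed

lemma reduces_to_pochhammer_of_nat_divide:
  assumes "d * t = q"
  shows "reduces_to (pochhammer (of_nat j / of_nat d :: 'a) k) ((-1) ^ k * (fact k * int ((j * t) choose k)))"
  using reduces_to_pochhammer[OF reduces_to_of_nat_divide[OF assms]] unfolding pochhammer_minus_of_nat .

lemma hyp_tr_reduces_to:
  assumes "d \<ge> 2" "d * t = q"
  shows "reduces_to (hyp_tr (map (\<lambda>j. of_nat j / of_nat d) [1..<d]) (replicate (d - 2) 1) (nat p) (of_int x))
           (\<Sum>k<nat p. (\<Prod>j\<in>{1..<d}. (-1) ^ k * int ((j * t) choose k)) * x ^ k)"
  unfolding hyp_tr_def
proof (rule reduces_to_sum)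
  fix k assume "k \<in> {..<nat p}"
  then have "int k < p"
    by auto
  define P where "P = (\<Prod>j\<in>{1..<d}. (-1) ^ k * int ((j * t) choose k))"
  have d_minus: "d - 2 + 1 = d - 1"
    using assms(1) by simp
  have den: "(\<Prod>b\<leftarrow>replicate (d - 2) (1::'a). pochhammer b k) * fact k = of_int (fact k ^ (d - 1))"
    using d_minus by (simp flip: pochhammer_fact power_Suc2)
  have "reduces_to (\<Prod>j\<in>{1..<d}. pochhammer (of_nat j / of_nat d :: 'a) k)
                   (\<Prod>j\<in>{1..<d}. (-1) ^ k * (fact k * int ((j * t) choose k)))"
    by (intro reduces_to_prod reduces_to_pochhammer_of_nat_divide[OF assms(2)])
  also have "(\<Prod>j\<in>{1..<d}. (-1) ^ k * (fact k * int ((j * t) choose k))) = fact k ^ (d - 1) * P"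
    by (simp add: P_def prod.distrib mult_ac)
  finally have "reduces_to (\<Prod>j\<in>{1..<d}. pochhammer (of_nat j / of_nat d :: 'a) k) (fact k ^ (d - 1) * P)" .
  moreover have "\<not> p dvd fact k ^ (d - 1)"
    using prime_not_dvd_fact_int[OF prime \<open>int k < p\<close>] prime_dvd_power[OF prime] by blast
  ultimately have "reduces_to ((\<Prod>j\<in>{1..<d}. pochhammer (of_nat j / of_nat d :: 'a) k) / of_int (fact k ^ (d - 1))) P"
    by (rule reduces_to_divide)
  then show "reduces_to ((\<Prod>a\<leftarrow>map (\<lambda>j. of_nat j / of_nat d) [1..<d]. pochhammer a k) /
        ((\<Prod>b\<leftarrow>replicate (d - 2) 1. pochhammer b k) * fact k) * of_int x ^ k) (P * x ^ k)"
    unfolding prod_list_map_upt den by (intro reduces_to_mult reduces_to_power reduces_to_of_int)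
qed

end

theorem theorem3p3:
  fixes Zp :: "'a::field_char_0 set" and p :: int and d :: nat and t :: nat
    and T :: "int \<Rightarrow> 'a" and x :: int
  assumes "d \<ge> 2"
    and "prime p"
    and "[p = 1] (mod int d)"
    and "t = nat ((p - 1) div int d)"
    and "padic_like p Zp"
    and "char_generator p T"
    and "\<not> p dvd x"
  shows "cong_p Zp p
     (of_int p ^ (d - 2) *
        greene p (char_pow p T t) (map (\<lambda>j. char_pow p T (j * t)) [2..<d])
          (replicate (d - 2) (triv_char p)) x)
     ((-1) ^ d * hyp_tr (map (\<lambda>j. of_nat j / of_nat d) [1..<d]) (replicate (d - 2) 1)
          (nat p) (of_int x))"
proof -
  interpret padic_prime Zp p
    using assms(5,2) by unfold_locales
  have "int d dvd p - 1"
    using assms(3) by (simp add: cong_iff_dvd_diff cong_sym_eq)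
  then have "int d * int t = p - 1"
    using assms(1,4) p_ge_2 by (simp add: pos_imp_zdiv_nonneg_iff)
  then have dt: "d * t = q"
    by (metis nat_int of_nat_mult)
  obtain k where k: "coprime k q" "T = char_pow p teichmuller k"
    using char_generator_teichmuller_power[OF assms(6)] .
  then have "coprime k d"
    using dt by (metis coprime_mult_right_iff)
  have classical: "reduces_to ((-1) ^ d * hyp_tr (map (\<lambda>j. of_nat j / of_nat d) [1..<d]) (replicate (d - 2) 1)
          (nat p) (of_int x))
        ((-1) ^ d * (\<Sum>k<nat p. (\<Prod>j\<in>{1..<d}. (-1) ^ k * int ((j * t) choose k)) * x ^ k))"
    by (intro reduces_to_mult reduces_to_power hyp_tr_reduces_to[OF assms(1) dt])
      (use reduces_to_of_int[of "-1"] in simp)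
  show ?thesis
    by (rule cong_p_if_reduces_to[OF greene_reduces_to[OF assms(1) dt assms(6) k(2) \<open>coprime k d\<close> assms(7)]
          classical binomial_series_reflect_cong[OF prime dt assms(1)]])
qed

end
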